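(* Let $\mathbb E$ be a Banach space, $\hat\varphi(x)\in\mathbb E[[x]]$, $k\in\mathbb N$ and $s>0$. Then $$(\partial^{-1}_{\Gamma_s,x})^k\hat\varphi(x)=-\int_0^{x^{1/s}}\hat\varphi(y^s)\,\partial_y\frac{(x^{1/s}-y)^{ks}}{\Gamma_s(k)}\,dy,$$ where the right-hand side is understood term by term in the power series expansion of $\hat\varphi$.
   Context: $\Gamma_s(u):=\Gamma(1+su)$ for $s>0$. The $\Gamma_s$-moment integration operator is defined on $\mathbb E[[x]]$ by $\partial^{-1}_{\Gamma_s,x}\big(\sum_{j\ge0}\frac{u_j}{\Gamma_s(j)}x^j\big):=\sum_{j\ge1}\frac{u_{j-1}}{\Gamma_s(j)}x^j$. *)

theory Defs
  imports "HOL-Analysis.Analysis" "HOL-Computational_Algebra.Formal_Power_Series"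
begin

definition Gamma_s :: "real \<Rightarrow> real \<Rightarrow> real" where
  "Gamma_s s u = Gamma (1 + s * u)"

text \<open>A series
  sum_j (u_j / Gamma_s(j)) x^j has coefficients a_j = u_j / Gamma_s(j), i.e.
  u_j = Gamma_s(j) a_j; the image has coefficient u_(j-1) / Gamma_s(j) at j >= 1
  and 0 at j = 0.\<close>
definition moment_int :: "real \<Rightarrow> 'a::real_vector fps \<Rightarrow> 'a fps" where
  "moment_int s f = Abs_fps (\<lambda>j. if j = 0 then 0
      else (1 / Gamma_s s (real j)) *\<^sub>R (Gamma_s s (real (j - 1)) *\<^sub>R (fps_nth f (j - 1))))"

end

theory Submission
  imports Defs
begin

text \<open>Iterating the operator k times multiplies the coefficient of x^(n-k) by
  Gamma_s(n-k) / Gamma_s(n) and shifts it to x^n.  On the integral side the substitution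
  y = X t with X = x^(1/s) turns the term of order j into a Beta integral, and
  b Beta(a, b) = Gamma(a) Gamma(b+1) / Gamma(a+b) with a = s j + 1, b = k s gives exactly
  the factor x^(j+k) Gamma_s(j) Gamma_s(k) / Gamma_s(j+k); the kernel's normalisation
  by Gamma_s(k) cancels the middle factor.\<close>

lemma Gamma_s_pos: "s > 0 \<Longrightarrow> Gamma_s s (real n) > 0"
  unfolding Gamma_s_def by (intro Gamma_real_pos) (simp add: add_pos_nonneg)

lemma fps_nth_moment_int:
  "fps_nth (moment_int s f) j = (if j = 0 then 0
      else (Gamma_s s (real (j - 1)) / Gamma_s s (real j)) *\<^sub>R fps_nth f (j - 1))"
  by (simp add: moment_int_def)

lemma fps_nth_moment_int_funpow:
  assumes "s > 0"
  shows "fps_nth ((moment_int s ^^ k) f) n =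
    (if n < k then 0 else (Gamma_s s (real (n - k)) / Gamma_s s (real n)) *\<^sub>R fps_nth f (n - k))"
proof (induction k arbitrary: n)
  case 0
  then show ?case using Gamma_s_pos[OF assms, of n] by simp
next
  case (Suc k)
  show ?case
  proof (cases n)
    case 0
    then show ?thesis by (simp add: fps_nth_moment_int)
  next
    case (Suc m)
    have "Gamma_s s (real m) \<noteq> 0" using Gamma_s_pos[OF assms, of m] by simp
    then show ?thesis using Suc by (simp add: fps_nth_moment_int Suc.IH Suc_diff_le)
  qed
qed

lemma has_integral_Beta_real_scaled:
  fixes a b X :: real
  assumes "a > 0" "b > 0" "X > 0"
  shows "((\<lambda>y. y powr (a - 1) * (X - y) powr (b - 1)) has_integral X powr (a + b - 1) * Beta a b) {0..X}"
proof -
  define f where "f = (\<lambda>t::real. t powr (a - 1) * (1 - t) powr (b - 1))"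
  have "(f has_integral Beta a b) (cbox 0 1)"
    using has_integral_Beta_real[OF assms(1,2)] by (simp add: f_def)
  from has_integral_affinity'[OF this, of "1/X" 0]
  have "((\<lambda>y. f (y / X)) has_integral X * Beta a b) {0..X}"
    using assms(3) by (simp add: field_simps)
  then have "((\<lambda>y. X powr (a + b - 2) * f (y / X)) has_integral X powr (a + b - 2) * (X * Beta a b)) {0..X}"
    by (rule has_integral_mult_right)
  moreover have "X powr (a + b - 2) * X = X powr (a + b - 1)"
    using powr_add[of X "a + b - 2" 1] assms(3) by simp
  ultimately have scaled: "((\<lambda>y. X powr (a + b - 2) * f (y / X)) has_integral X powr (a + b - 1) * Beta a b) {0..X}"
    by (simp add: mult.assoc[symmetric])
  show ?thesis
  proof (rule has_integral_spike_finite[OF _ _ scaled, of "{0, X}"])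
    fix y assume "y \<in> {0..X} - {0, X}"
    then have y: "0 < y" "y < X" by auto
    have "1 - y / X = (X - y) / X" using assms(3) by (simp add: field_simps)
    then have "f (y / X) = (y powr (a - 1) / X powr (a - 1)) * ((X - y) powr (b - 1) / X powr (b - 1))"
      unfolding f_def using y by (simp add: powr_divide)
    moreover have "X powr (a + b - 2) = X powr (a - 1) * X powr (b - 1)"
      by (simp add: powr_add[symmetric])
    ultimately show "y powr (a - 1) * (X - y) powr (b - 1) = X powr (a + b - 2) * f (y / X)"
      using assms(3) by (simp add: field_simps)
  qed simp
qed

lemma deriv_powr_reflected:
  fixes X b z :: real
  assumes "z < X"
  shows "deriv (\<lambda>z. (X - z) powr b) z = - b * (X - z) powr (b - 1)"
  by (rule DERIV_imp_deriv) (use assms in \<open>auto intro!: derivative_eq_intros\<close>)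

lemma Beta_mult_right:
  fixes a b :: real
  assumes "b > 0"
  shows "b * Beta a b = Gamma a * Gamma (b + 1) / Gamma (a + b)"
proof -
  have "b \<notin> \<int>\<^sub>\<le>\<^sub>0" using assms by (auto elim!: nonpos_Ints_cases)
  then show ?thesis unfolding Beta_def by (simp add: Gamma_plus1)
qed

lemma has_integral_powr_deriv_powr_reflected:
  fixes a b X :: real
  assumes "a > 0" "b > 0" "X > 0"
  shows "((\<lambda>y. y powr (a - 1) * deriv (\<lambda>z. (X - z) powr b) y) has_integral
           - (X powr (a + b - 1) * (Gamma a * Gamma (b + 1) / Gamma (a + b)))) {0..X}"
proof -
  have "((\<lambda>y. - b * (y powr (a - 1) * (X - y) powr (b - 1))) has_integral
          - b * (X powr (a + b - 1) * Beta a b)) {0..X}"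
    by (intro has_integral_mult_right has_integral_Beta_real_scaled assms)
  moreover have "- b * (X powr (a + b - 1) * Beta a b) =
                 - (X powr (a + b - 1) * (Gamma a * Gamma (b + 1) / Gamma (a + b)))"
    by (simp only: Beta_mult_right[OF assms(2), symmetric]) (simp add: algebra_simps)
  ultimately have beta: "((\<lambda>y. - b * (y powr (a - 1) * (X - y) powr (b - 1))) has_integral
          - (X powr (a + b - 1) * (Gamma a * Gamma (b + 1) / Gamma (a + b)))) {0..X}"
    by simp
  show ?thesis
  proof (rule has_integral_spike_finite[OF _ _ beta, of "{X}"])
    fix y assume "y \<in> {0..X} - {X}"
    then show "y powr (a - 1) * deriv (\<lambda>z. (X - z) powr b) y =
               - b * (y powr (a - 1) * (X - y) powr (b - 1))"
      by (simp add: deriv_powr_reflected)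
  qed simp
qed

lemma has_integral_moment_kernel:
  fixes v :: "'a::real_normed_vector" and k j :: nat and s x :: real
  assumes s: "s > 0" and k: "k \<ge> 1" and x: "x > 0"
  shows "((\<lambda>y. ((y powr s) ^ j *
                 deriv (\<lambda>z. (x powr (1 / s) - z) powr (real k * s) / Gamma_s s (real k)) y) *\<^sub>R v)
          has_integral - ((x ^ (j + k) * (Gamma_s s (real j) / Gamma_s s (real (j + k)))) *\<^sub>R v))
         {0 .. x powr (1 / s)}"
proof -
  define X where "X = x powr (1 / s)"
  define K where "K = (\<lambda>z. (X - z) powr (real k * s))"
  define G where "G = Gamma_s s (real k)"
  have X: "X > 0" using x by (simp add: X_def)
  have "s * j + 1 > 0" using s by (intro add_nonneg_pos) simp_all
  have exponent: "(1 / s) * (s * j + real k * s) = real (j + k)"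
    using s by (simp add: field_simps)
  have X_power: "X powr (s * j + real k * s) = x ^ (j + k)"
    unfolding X_def powr_powr exponent using x by (rule powr_realpow)
  have "((\<lambda>y. y powr (s * j) * deriv K y) has_integral
          - (x ^ (j + k) * (Gamma_s s (real j) * G / Gamma_s s (real (j + k))))) {0..X}"
    using has_integral_powr_deriv_powr_reflected[of "s * j + 1" "real k * s" X] s k X X_power
      \<open>s * j + 1 > 0\<close>
    by (simp add: K_def G_def Gamma_s_def algebra_simps)
  from has_integral_scaleR_left[OF has_integral_divide[OF this, of G], of v]
  have integral: "((\<lambda>y. (y powr (s * j) * deriv K y / G) *\<^sub>R v) has_integral
          - ((x ^ (j + k) * (Gamma_s s (real j) / Gamma_s s (real (j + k)))) *\<^sub>R v)) {0..X}"
    using Gamma_s_pos[OF s, of k] by (simp add: G_def)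
  show ?thesis
    unfolding X_def[symmetric] G_def[symmetric]
  proof (rule has_integral_spike_finite[OF _ _ integral, of "{0, X}"])
    fix y assume "y \<in> {0..X} - {0, X}"
    then have y: "0 < y" "y < X" by auto
    have "K field_differentiable at y"
      unfolding K_def field_differentiable_def using y
      by (auto intro!: derivative_eq_intros)
    then have "deriv (\<lambda>z. (X - z) powr (real k * s) / G) y = deriv K y / G"
      unfolding K_def by (rule deriv_cdivide_right)
    moreover have "(y powr s) ^ j = y powr (s * j)"
      using y by (simp add: powr_realpow[symmetric] powr_powr)
    ultimately show "((y powr s) ^ j * deriv (\<lambda>z. (X - z) powr (real k * s) / G) y) *\<^sub>R v =
                     (y powr (s * j) * deriv K y / G) *\<^sub>R v"
      by simp
  qed simp
qed

theorem lemma2: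
  fixes phi :: "'a::banach fps" and k :: nat and s :: real
  assumes "s > 0" and "k \<ge> 1"
  shows "(\<forall>n<k. fps_nth ((moment_int s ^^ k) phi) n = 0) \<and>
         (\<forall>j. \<forall>x::real. x > 0 \<longrightarrow>
            (\<lambda>y. (((y powr s) ^ j) *
                    deriv (\<lambda>z. (x powr (1 / s) - z) powr (real k * s) / Gamma_s s (real k)) y)
                   *\<^sub>R (fps_nth phi j)) integrable_on {0 .. x powr (1 / s)}
          \<and> (x ^ (j + k)) *\<^sub>R (fps_nth ((moment_int s ^^ k) phi) (j + k)) =
            - integral {0 .. x powr (1 / s)}
               (\<lambda>y. (((y powr s) ^ j) *
                    deriv (\<lambda>z. (x powr (1 / s) - z) powr (real k * s) / Gamma_s s (real k)) y)
                   *\<^sub>R (fps_nth phi j)))"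
proof (intro conjI allI impI)
  fix n assume "n < k"
  then show "fps_nth ((moment_int s ^^ k) phi) n = 0"
    by (simp add: fps_nth_moment_int_funpow[OF assms(1)])
next
  fix j and x :: real assume "x > 0"
  note kernel = has_integral_moment_kernel[OF assms this, of j "fps_nth phi j"]
  from kernel show "(\<lambda>y. (((y powr s) ^ j) *
                    deriv (\<lambda>z. (x powr (1 / s) - z) powr (real k * s) / Gamma_s s (real k)) y)
                   *\<^sub>R (fps_nth phi j)) integrable_on {0 .. x powr (1 / s)}"
    by blast
  from integral_unique[OF kernel]
  show "(x ^ (j + k)) *\<^sub>R (fps_nth ((moment_int s ^^ k) phi) (j + k)) =
            - integral {0 .. x powr (1 / s)}
               (\<lambda>y. (((y powr s) ^ j) *
                    deriv (\<lambda>z. (x powr (1 / s) - z) powr (real k * s) / Gamma_s s (real k)) y)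
                   *\<^sub>R (fps_nth phi j))"
    by (simp add: fps_nth_moment_int_funpow[OF assms(1)])
qed

end
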